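(* Let $\beta,\delta\in(0,1)$, $K>0$, and let $\eta_1,\eta_2\ge0$ be constants. Consider $$\frac{df}{dt}=\tfrac12 fm\beta L-\delta f-\eta_1 f^{3/2},\qquad \frac{dm}{dt}=\tfrac12 fm\beta L-\delta m+\eta_2 m^{3/2},\qquad L=1-\frac{f+m}{K}.$$ If $\beta K<2\delta-\eta_2\sqrt K$ and $\delta>\eta_2\sqrt K$, then the trivial equilibrium $(0,0)$ is globally asymptotically stable.
   Context: $f,m$ are female and male densities, with populations considered in the region $0\le f,m$, $f+m\le K$. The model uses power-law female harvesting and male stocking. *)

theory Defs
  imports "HOL-Analysis.Analysis"
begin

definition Lfac :: "real \<Rightarrow> real \<Rightarrow> real \<Rightarrow> real" where
  "Lfac K f m = 1 - (f + m) / K"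

definition vfield :: "real \<Rightarrow> real \<Rightarrow> real \<Rightarrow> real \<Rightarrow> real \<Rightarrow> real \<times> real \<Rightarrow> real \<times> real" where
  "vfield \<beta> \<delta> \<eta>1 \<eta>2 K p =
     (let f = fst p; m = snd p in
       (1/2 * f * m * \<beta> * Lfac K f m - \<delta> * f - \<eta>1 * f powr (3/2),
        1/2 * f * m * \<beta> * Lfac K f m - \<delta> * m + \<eta>2 * m powr (3/2)))"

definition region :: "real \<Rightarrow> (real \<times> real) set" where
  "region K = {p. 0 \<le> fst p \<and> 0 \<le> snd p \<and> fst p + snd p \<le> K}"

definition is_solution_in ::
  "((real \<times> real) \<Rightarrow> (real \<times> real)) \<Rightarrow> (real \<times> real) set \<Rightarrow> (real \<Rightarrow> real \<times> real) \<Rightarrow> bool" where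
  "is_solution_in F D x \<longleftrightarrow>
     (\<forall>t\<ge>0. (x has_vector_derivative F (x t)) (at t within {0..})) \<and>
     (\<forall>t\<ge>0. x t \<in> D)"

definition globally_asymptotically_stable ::
  "((real \<times> real) \<Rightarrow> (real \<times> real)) \<Rightarrow> (real \<times> real) set \<Rightarrow> real \<times> real \<Rightarrow> bool" where
  "globally_asymptotically_stable F D p \<longleftrightarrow>
     p \<in> D \<and> F p = 0 \<and>
     (\<forall>\<epsilon>>0. \<exists>r>0. \<forall>x. is_solution_in F D x \<and> dist (x 0) p < r \<longrightarrow>
        (\<forall>t\<ge>0. dist (x t) p < \<epsilon>)) \<and>
     (\<forall>x. is_solution_in F D x \<longrightarrow> (x \<longlongrightarrow> p) at_top)"

end

theory Submission
  imports Defs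
begin

text \<open>The total population V = f + m is a Lyapunov function. On the region
  V L \<le> K/4 and \<eta>2 m^(3/2) \<le> \<eta>2 sqrt K m, so V V' \<le> \<beta>K/4 fm - \<delta>V^2 + \<eta>2 sqrt K mV,
  and the two hypotheses make this quadratic form at most -c V^2 with
  c = (\<delta> - \<eta>2 sqrt K)/2 > 0. Hence V decays like exp(-c t) along every solution,
  which gives both Lyapunov stability and global attractivity of the origin.\<close>

lemma exp_decay_of_derivative_bound:
  fixes V V' :: "real \<Rightarrow> real"
  assumes deriv: "\<And>s. 0 \<le> s \<Longrightarrow> (V has_real_derivative V' s) (at s within {0..})"
    and bound: "\<And>s. 0 \<le> s \<Longrightarrow> V' s \<le> - c * V s"
    and "0 \<le> t"
  shows "V t \<le> exp (- c * t) * V 0"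
proof -
  define W where "W s = exp (c * s) * V s" for s
  define W' where "W' s = exp (c * s) * (c * V s + V' s)" for s
  have "\<exists>z\<in>{0..t}. W t - W 0 = W' z * (t - 0)"
  proof (rule mvt_very_simple[OF \<open>0 \<le> t\<close>])
    fix s assume s: "0 \<le> s" "s \<le> t"
    have "((\<lambda>s. exp (c * s)) has_real_derivative exp (c * s) * c) (at s within {0..})"
      by (auto intro!: derivative_eq_intros)
    from DERIV_mult[OF this deriv[OF s(1)]]
    have "(W has_real_derivative W' s) (at s within {0..})"
      by (simp add: W_def[abs_def] W'_def algebra_simps)
    then have "(W has_real_derivative W' s) (at s within {0..t})"
      by (rule DERIV_subset) auto
    then show "(W has_derivative (\<lambda>h. W' s * h)) (at s within {0..t})"
      by (simp add: has_field_derivative_def)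
  qed
  then obtain z where z: "0 \<le> z" "W t - W 0 = W' z * t" by auto
  have "W' z \<le> 0"
    using bound[OF z(1)] by (simp add: W'_def mult_nonneg_nonpos)
  then have "W' z * t \<le> 0"
    using \<open>0 \<le> t\<close> by (rule mult_nonpos_nonneg)
  then have "exp (c * t) * V t \<le> V 0"
    using z by (simp add: W_def)
  then show ?thesis
    by (simp add: exp_minus field_simps)
qed

lemma has_real_derivative_fst_plus_snd:
  fixes x :: "real \<Rightarrow> real \<times> real"
  assumes "(x has_vector_derivative v) F"
  shows "((\<lambda>t. fst (x t) + snd (x t)) has_real_derivative fst v + snd v) F"
proof -
  have "(x has_derivative (\<lambda>h. h *\<^sub>R v)) F"
    using assms by (simp add: has_vector_derivative_def)
  then have "((\<lambda>t. fst (x t) + snd (x t)) has_derivative (\<lambda>h. fst (h *\<^sub>R v) + snd (h *\<^sub>R v))) F"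
    by (intro has_derivative_add has_derivative_fst has_derivative_snd)
  then show ?thesis
    unfolding has_field_derivative_def by (rule has_derivative_eq_rhs) (auto simp: algebra_simps)
qed

lemma globally_asymptotically_stable_of_exponential_bound:
  assumes "p \<in> D" "F p = 0" "0 < c" "0 \<le> M"
    and bound: "\<And>x t. is_solution_in F D x \<Longrightarrow> 0 \<le> t \<Longrightarrow>
      dist (x t) p \<le> M * exp (- c * t) * dist (x 0) p"
  shows "globally_asymptotically_stable F D p"
proof -
  have stable: "\<exists>r>0. \<forall>x. is_solution_in F D x \<and> dist (x 0) p < r \<longrightarrow> (\<forall>t\<ge>0. dist (x t) p < \<epsilon>)"
    if "0 < \<epsilon>" for \<epsilon>
  proof (intro exI[of _ "\<epsilon> / (M + 1)"] conjI allI impI)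
    show "0 < \<epsilon> / (M + 1)" using that \<open>0 \<le> M\<close> by simp
    fix x and t :: real
    assume x: "is_solution_in F D x \<and> dist (x 0) p < \<epsilon> / (M + 1)" and "0 \<le> t"
    have "exp (- c * t) \<le> 1"
      using \<open>0 < c\<close> \<open>0 \<le> t\<close> by simp
    then have "M * exp (- c * t) \<le> M"
      using \<open>0 \<le> M\<close> by (metis mult.right_neutral mult_left_mono)
    have "dist (x t) p \<le> M * exp (- c * t) * dist (x 0) p"
      by (rule bound[OF conjunct1[OF x] \<open>0 \<le> t\<close>])
    also have "\<dots> \<le> M * dist (x 0) p"
      using \<open>M * exp (- c * t) \<le> M\<close> by (simp add: mult_right_mono)
    also have "\<dots> \<le> M * (\<epsilon> / (M + 1))"
      using mult_left_mono[OF less_imp_le[OF conjunct2[OF x]] \<open>0 \<le> M\<close>] .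
    also have "\<dots> < \<epsilon>"
      using that \<open>0 \<le> M\<close> by (simp add: divide_simps)
    finally show "dist (x t) p < \<epsilon>" .
  qed
  have attractive: "(x \<longlongrightarrow> p) at_top" if x: "is_solution_in F D x" for x
  proof -
    have "filterlim (\<lambda>t::real. - c * t) at_bot at_top"
      using \<open>0 < c\<close> by (intro filterlim_tendsto_neg_mult_at_bot[OF tendsto_const _ filterlim_ident]) simp
    then have "((\<lambda>t. exp (- c * t)) \<longlongrightarrow> 0) at_top"
      by (rule filterlim_compose[OF exp_at_bot])
    then have upper: "((\<lambda>t. M * exp (- c * t) * dist (x 0) p) \<longlongrightarrow> 0) at_top"
      by (intro tendsto_mult_left_zero tendsto_mult_right_zero)
    have dominated: "\<forall>\<^sub>F t in at_top. dist (x t) p \<le> M * exp (- c * t) * dist (x 0) p"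
      by (rule eventually_at_top_linorderI[of 0]) (rule bound[OF x])
    have "((\<lambda>t. dist (x t) p) \<longlongrightarrow> 0) at_top"
      by (rule real_tendsto_sandwich[OF _ dominated tendsto_const upper]) simp
    then show ?thesis
      by (rule tendsto_dist_iff[THEN iffD2])
  qed
  show ?thesis
    unfolding globally_asymptotically_stable_def
    by (intro conjI assms(1,2) allI impI stable attractive)
qed

lemma norm_le_fst_plus_snd:
  fixes p :: "real \<times> real"
  assumes "0 \<le> fst p" "0 \<le> snd p"
  shows "norm p \<le> fst p + snd p"
  using norm_Pair_le[of "fst p" "snd p"] assms by simp

lemma fst_plus_snd_le_two_norm:
  fixes p :: "real \<times> real"
  shows "fst p + snd p \<le> 2 * norm p"
  using norm_fst_le[of "fst p" "snd p"] norm_snd_le[of "snd p" "fst p"] by simp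

lemma powr_three_halves_le:
  fixes m K :: real
  assumes "0 \<le> m" "m \<le> K"
  shows "m powr (3/2) \<le> sqrt K * m"
proof -
  have "m powr (3/2) = m * sqrt m"
    using assms by (cases "m = 0") (simp_all add: powr_add[of m 1 "1/2", simplified] powr_half_sqrt)
  also have "\<dots> \<le> sqrt K * m"
    using assms by (simp add: mult.commute mult_left_mono)
  finally show ?thesis .
qed

lemma mult_Lfac_le:
  fixes K f m :: real
  assumes "0 < K"
  shows "(f + m) * Lfac K f m \<le> K / 4"
proof -
  have "K / 4 - (f + m) * Lfac K f m = (K / 2 - (f + m))\<^sup>2 / K"
    using assms by (simp add: Lfac_def field_simps power2_eq_square)
  then show ?thesis
    using assms by (metis diff_ge_0_iff_ge divide_nonneg_pos zero_le_power2)
qed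

lemma mixed_quadratic_le:
  fixes a \<delta> f m :: real
  assumes "0 \<le> a" "a \<le> \<delta>" "0 \<le> f" "0 \<le> m"
  shows "(2 * \<delta> - a) / 4 * (f * m) + a * m * (f + m) - \<delta> * (f + m)\<^sup>2
    \<le> - ((\<delta> - a) / 2) * (f + m)\<^sup>2"
proof -
  have "- ((\<delta> - a) / 2) * (f + m)\<^sup>2
      - ((2 * \<delta> - a) / 4 * (f * m) + a * m * (f + m) - \<delta> * (f + m)\<^sup>2)
    = (\<delta> + a) / 2 * f\<^sup>2 + (\<delta> - a) / 2 * m\<^sup>2 + (2 * \<delta> + a) / 4 * (f * m)"
    by (simp add: field_simps power2_eq_square)
  moreover have "0 \<le> (\<delta> + a) / 2 * f\<^sup>2 + (\<delta> - a) / 2 * m\<^sup>2 + (2 * \<delta> + a) / 4 * (f * m)"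
    using assms by (intro add_nonneg_nonneg mult_nonneg_nonneg) auto
  ultimately show ?thesis
    by linarith
qed

lemma vfield_fst_plus_snd_le:
  fixes \<beta> \<delta> \<eta>1 \<eta>2 K :: real
  assumes "0 \<le> \<beta>" "0 < K" "0 \<le> \<eta>1" "0 \<le> \<eta>2"
    and "\<beta> * K \<le> 2 * \<delta> - \<eta>2 * sqrt K" and "\<eta>2 * sqrt K \<le> \<delta>"
    and "p \<in> region K"
  shows "fst (vfield \<beta> \<delta> \<eta>1 \<eta>2 K p) + snd (vfield \<beta> \<delta> \<eta>1 \<eta>2 K p)
    \<le> - ((\<delta> - \<eta>2 * sqrt K) / 2) * (fst p + snd p)"
proof -
  obtain f m where p: "p = (f, m)"
    by (cases p)
  define a where "a = \<eta>2 * sqrt K"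
  have "0 \<le> a" "a \<le> \<delta>"
    using assms(2,4,6) by (simp_all add: a_def)
  define S where "S = f + m"
  define L where "L = Lfac K f m"
  define V' where "V' = f * m * \<beta> * L - \<delta> * S - \<eta>1 * f powr (3/2) + \<eta>2 * m powr (3/2)"
  have f: "0 \<le> f" and m: "0 \<le> m" and "S \<le> K"
    using \<open>p \<in> region K\<close> by (auto simp: p S_def region_def)
  have total: "fst (vfield \<beta> \<delta> \<eta>1 \<eta>2 K p) + snd (vfield \<beta> \<delta> \<eta>1 \<eta>2 K p) = V'"
    by (simp add: p vfield_def V'_def L_def S_def algebra_simps)
  have "\<eta>2 * m powr (3/2) \<le> a * m"
    using powr_three_halves_le[OF m] \<open>S \<le> K\<close> f \<open>0 \<le> \<eta>2\<close>
    by (simp add: a_def S_def mult.assoc mult_left_mono)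
  moreover have "0 \<le> \<eta>1 * f powr (3/2)"
    using \<open>0 \<le> \<eta>1\<close> by simp
  ultimately have "V' * S \<le> (f * m * \<beta> * L - \<delta> * S + a * m) * S"
    using f m by (intro mult_right_mono) (auto simp: V'_def S_def)
  also have "\<dots> = f * m * \<beta> * (S * L) + a * m * S - \<delta> * S\<^sup>2"
    by (simp add: algebra_simps power2_eq_square)
  also have "\<dots> \<le> f * m * \<beta> * (K / 4) + a * m * S - \<delta> * S\<^sup>2"
    using mult_Lfac_le[OF \<open>0 < K\<close>, of f m] f m \<open>0 \<le> \<beta>\<close>
    by (simp add: S_def L_def mult_left_mono del: times_divide_eq_right)
  also have "\<dots> \<le> (2 * \<delta> - a) / 4 * (f * m) + a * m * S - \<delta> * S\<^sup>2"
  proof -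
    have "\<beta> * K / 4 * (f * m) \<le> (2 * \<delta> - a) / 4 * (f * m)"
      using assms(5) f m by (intro mult_right_mono) (auto simp: a_def)
    then show ?thesis
      by (simp add: mult_ac)
  qed
  also have "\<dots> \<le> - ((\<delta> - a) / 2) * S * S"
    using mixed_quadratic_le[OF \<open>0 \<le> a\<close> \<open>a \<le> \<delta>\<close> f m] by (simp add: S_def power2_eq_square)
  finally have "V' * S \<le> - ((\<delta> - a) / 2) * S * S" .
  moreover have "V' = 0" if "S = 0"
    using that f m by (simp add: V'_def S_def add_nonneg_eq_0_iff)
  moreover have "0 \<le> S"
    using f m by (simp add: S_def)
  ultimately have "V' \<le> - ((\<delta> - a) / 2) * S"
    using mult_le_cancel_right_pos[of S V' "- ((\<delta> - a) / 2) * S"] by force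
  then show ?thesis
    unfolding total by (simp add: p a_def S_def)
qed

lemma total_population_decay:
  fixes \<beta> \<delta> \<eta>1 \<eta>2 K :: real
  assumes "0 \<le> \<beta>" "0 < K" "0 \<le> \<eta>1" "0 \<le> \<eta>2"
    and "\<beta> * K \<le> 2 * \<delta> - \<eta>2 * sqrt K" and "\<eta>2 * sqrt K \<le> \<delta>"
    and x: "is_solution_in (vfield \<beta> \<delta> \<eta>1 \<eta>2 K) (region K) x" and "0 \<le> t"
  shows "fst (x t) + snd (x t) \<le> exp (- ((\<delta> - \<eta>2 * sqrt K) / 2) * t) * (fst (x 0) + snd (x 0))"
proof (rule exp_decay_of_derivative_bound[OF _ _ \<open>0 \<le> t\<close>])
  fix s :: real
  assume "0 \<le> s"
  then show "((\<lambda>t. fst (x t) + snd (x t)) has_real_derivative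
      fst (vfield \<beta> \<delta> \<eta>1 \<eta>2 K (x s)) + snd (vfield \<beta> \<delta> \<eta>1 \<eta>2 K (x s))) (at s within {0..})"
    using x by (intro has_real_derivative_fst_plus_snd) (simp add: is_solution_in_def)
  show "fst (vfield \<beta> \<delta> \<eta>1 \<eta>2 K (x s)) + snd (vfield \<beta> \<delta> \<eta>1 \<eta>2 K (x s))
      \<le> - ((\<delta> - \<eta>2 * sqrt K) / 2) * (fst (x s) + snd (x s))"
    using x \<open>0 \<le> s\<close> by (intro vfield_fst_plus_snd_le[OF assms(1-6)]) (simp add: is_solution_in_def)
qed

theorem mainTheorem13:
  fixes \<beta> \<delta> \<eta>1 \<eta>2 K :: real
  assumes "0 < \<beta>" "\<beta> < 1" "0 < \<delta>" "\<delta> < 1" "0 < K"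
    and "0 \<le> \<eta>1" "0 \<le> \<eta>2"
    and "\<beta> * K < 2 * \<delta> - \<eta>2 * sqrt K"
    and "\<delta> > \<eta>2 * sqrt K"
  shows "globally_asymptotically_stable (vfield \<beta> \<delta> \<eta>1 \<eta>2 K) (region K) (0, 0)"
proof -
  define c where "c = (\<delta> - \<eta>2 * sqrt K) / 2"
  have decay: "dist (x t) 0 \<le> 2 * exp (- c * t) * dist (x 0) 0"
    if x: "is_solution_in (vfield \<beta> \<delta> \<eta>1 \<eta>2 K) (region K) x" and "0 \<le> t" for x t
  proof -
    have "x t \<in> region K"
      using x \<open>0 \<le> t\<close> by (simp add: is_solution_in_def)
    then have "norm (x t) \<le> fst (x t) + snd (x t)"
      by (intro norm_le_fst_plus_snd) (auto simp: region_def)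
    also have "\<dots> \<le> exp (- c * t) * (fst (x 0) + snd (x 0))"
      unfolding c_def using assms by (intro total_population_decay[OF _ _ _ _ _ _ x \<open>0 \<le> t\<close>]) auto
    also have "\<dots> \<le> exp (- c * t) * (2 * norm (x 0))"
      by (intro mult_left_mono fst_plus_snd_le_two_norm) simp
    finally show ?thesis
      by simp
  qed
  have "(0, 0) = (0 :: real \<times> real)"
    by (simp add: zero_prod_def)
  moreover have "globally_asymptotically_stable (vfield \<beta> \<delta> \<eta>1 \<eta>2 K) (region K) 0"
    using assms decay
    by (intro globally_asymptotically_stable_of_exponential_bound[where c = c and M = 2])
      (auto simp: region_def vfield_def zero_prod_def c_def)
  ultimately show ?thesis
    by simp
qed

end
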